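(* Let $X,Y$ be compact metric spaces, $\epsilon\ge0$, and let $X_\epsilon\subseteq X$, $Y_\epsilon\subseteq Y$ be $\epsilon$-nets of $X$ and $Y$ respectively. Then $|d_{\mathrm{GH}}(X,Y)-d_{\mathrm{GH}}(X_\epsilon,Y_\epsilon)|\le\epsilon$ and $|\widehat{d}_{\mathrm{GH}}(X,Y)-\widehat{d}_{\mathrm{GH}}(X_\epsilon,Y_\epsilon)|\le\epsilon$.
   Context: $X_\epsilon\subseteq X$ is an $\epsilon$-net of $X$ if every point of $X$ is within distance $\le\epsilon$ of some point of $X_\epsilon$ (the nets are taken so that they are compact, e.g. finite). For $f:X\to Y$, $\operatorname{dis}(f)=\sup_{x,x'}|d_X(x,x')-d_Y(f(x),f(x'))|$; $\operatorname{codis}(f,g)=\sup_{x,y}|d_X(x,g(y))-d_Y(f(x),y)|$. $d_{\mathrm{GH}}$ is the Gromov--Hausdorff distance, equal to $\frac12\inf_{f,g}\max\{\operatorname{dis}(f),\operatorname{dis}(g),\operatorname{codis}(f,g)\}$; the modified Gromov--Hausdorff distance is $\widehat{d}_{\mathrm{GH}}(X,Y)=\frac12\max\{\inf_{f:X\to Y}\operatorname{dis}(f),\inf_{g:Y\to X}\operatorname{dis}(g)\}$. *)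

theory Defs
  imports "HOL-Analysis.Analysis"
begin

definition dis :: "'a set \<Rightarrow> ('a \<Rightarrow> 'a \<Rightarrow> real) \<Rightarrow> ('b \<Rightarrow> 'b \<Rightarrow> real) \<Rightarrow> ('a \<Rightarrow> 'b) \<Rightarrow> real" where
  "dis X dX dY f = (SUP p \<in> X \<times> X. \<bar>dX (fst p) (snd p) - dY (f (fst p)) (f (snd p))\<bar>)"

definition codis :: "'a set \<Rightarrow> ('a \<Rightarrow> 'a \<Rightarrow> real) \<Rightarrow> 'b set \<Rightarrow> ('b \<Rightarrow> 'b \<Rightarrow> real)
    \<Rightarrow> ('a \<Rightarrow> 'b) \<Rightarrow> ('b \<Rightarrow> 'a) \<Rightarrow> real" where
  "codis X dX Y dY f g = (SUP p \<in> X \<times> Y. \<bar>dX (fst p) (g (snd p)) - dY (f (fst p)) (snd p)\<bar>)"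

definition dGH :: "'a set \<Rightarrow> ('a \<Rightarrow> 'a \<Rightarrow> real) \<Rightarrow> 'b set \<Rightarrow> ('b \<Rightarrow> 'b \<Rightarrow> real) \<Rightarrow> real" where
  "dGH X dX Y dY = (1/2) * (INF fg \<in> (X \<rightarrow> Y) \<times> (Y \<rightarrow> X).
      max (dis X dX dY (fst fg)) (max (dis Y dY dX (snd fg)) (codis X dX Y dY (fst fg) (snd fg))))"

definition mdGH :: "'a set \<Rightarrow> ('a \<Rightarrow> 'a \<Rightarrow> real) \<Rightarrow> 'b set \<Rightarrow> ('b \<Rightarrow> 'b \<Rightarrow> real) \<Rightarrow> real" where
  "mdGH X dX Y dY = (1/2) * max (INF f \<in> X \<rightarrow> Y. dis X dX dY f) (INF g \<in> Y \<rightarrow> X. dis Y dY dX g)"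

definition is_eps_net :: "'a set \<Rightarrow> ('a \<Rightarrow> 'a \<Rightarrow> real) \<Rightarrow> real \<Rightarrow> 'a set \<Rightarrow> bool" where
  "is_eps_net X d \<epsilon> N \<longleftrightarrow> N \<subseteq> X \<and> (\<forall>x\<in>X. \<exists>y\<in>N. d x y \<le> \<epsilon>)"

end

theory Submission
  imports Defs
begin

text \<open>
  Choose maps \<open>p : X \<rightarrow> X\<^sub>\<epsilon>\<close> and \<open>q : Y \<rightarrow> Y\<^sub>\<epsilon>\<close> that move every point by at most \<open>\<epsilon>\<close>.
  A map \<open>f : X \<rightarrow> Y\<close> yields \<open>q \<circ> f : X\<^sub>\<epsilon> \<rightarrow> Y\<^sub>\<epsilon>\<close>, and a map \<open>f : X\<^sub>\<epsilon> \<rightarrow> Y\<^sub>\<epsilon>\<close>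
  yields \<open>f \<circ> p : X \<rightarrow> Y\<close>. Either way each distance compared in \<open>dis\<close> or \<open>codis\<close> moves by
  at most \<open>\<epsilon>\<close> at each of its two ends, so distortion and codistortion grow by at most
  \<open>2\<epsilon>\<close>. Hence every infimum in the definitions of \<open>d\<^sub>G\<^sub>H\<close> and of its modified
  version changes by at most \<open>2\<epsilon>\<close> in either direction, and the halved quantities by at
  most \<open>\<epsilon>\<close>.

  Compactness of \<open>X\<close> and \<open>Y\<close> serves only to bound the distances, so that the suprema
  defining \<open>dis\<close> and \<open>codis\<close> are genuine suprema of bounded sets rather than junk values.
\<close>

lemma (in Metric_space) abs_mdist_diff_le:
  assumes "a \<in> M" "b \<in> M" "a' \<in> M" "b' \<in> M"
  shows "\<bar>d a b - d a' b'\<bar> \<le> d a a' + d b b'"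
  using triangle[of a a' b] triangle[of a' b' b] triangle[of a' a b'] triangle[of a b b']
    commute[of a a'] commute[of b b'] assms
  by linarith

lemma (in Metric_space) compact_space_imp_mbounded:
  "compact_space mtopology \<Longrightarrow> mbounded M"
  by (metis compact_space_def compactin_imp_mbounded topspace_mtopology)

lemma dis_least:
  assumes "A \<noteq> {}" and "\<And>x x'. x \<in> A \<Longrightarrow> x' \<in> A \<Longrightarrow> \<bar>dA x x' - dB (f x) (f x')\<bar> \<le> c"
  shows "dis A dA dB f \<le> c"
  unfolding dis_def using assms by (intro cSUP_least) auto

lemma codis_least:
  assumes "A \<noteq> {}" "B \<noteq> {}" and "\<And>x y. x \<in> A \<Longrightarrow> y \<in> B \<Longrightarrow> \<bar>dA x (g y) - dB (f x) y\<bar> \<le> c"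
  shows "codis A dA B dB f g \<le> c"
  unfolding codis_def using assms by (intro cSUP_least) auto

lemma INF_le_INF_add:
  fixes h k :: "_ \<Rightarrow> real"
  assumes "S \<noteq> {}" and "bdd_below (h ` T)" and "\<And>s. s \<in> S \<Longrightarrow> \<exists>t\<in>T. h t \<le> k s + c"
  shows "(INF t\<in>T. h t) \<le> (INF s\<in>S. k s) + c"
proof -
  have "(INF t\<in>T. h t) - c \<le> (INF s\<in>S. k s)"
  proof (rule cINF_greatest[OF assms(1)])
    fix s assume "s \<in> S"
    then obtain t where "t \<in> T" "h t \<le> k s + c" using assms(3) by blast
    moreover from \<open>t \<in> T\<close> have "(INF t\<in>T. h t) \<le> h t" by (rule cINF_lower[OF assms(2)])
    ultimately show "(INF t\<in>T. h t) - c \<le> k s" by linarith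
  qed
  then show ?thesis by linarith
qed

definition pair_distortion ::
    "'a set \<Rightarrow> ('a \<Rightarrow> 'a \<Rightarrow> real) \<Rightarrow> 'b set \<Rightarrow> ('b \<Rightarrow> 'b \<Rightarrow> real) \<Rightarrow> ('a \<Rightarrow> 'b) \<times> ('b \<Rightarrow> 'a) \<Rightarrow> real" where
  "pair_distortion X dX Y dY fg =
     max (dis X dX dY (fst fg)) (max (dis Y dY dX (snd fg)) (codis X dX Y dY (fst fg) (snd fg)))"

lemma dGH_eq_INF_pair_distortion:
  "dGH X dX Y dY = 1/2 * (INF fg \<in> (X \<rightarrow> Y) \<times> (Y \<rightarrow> X). pair_distortion X dX Y dY fg)"
  unfolding dGH_def pair_distortion_def ..

lemma pair_distortion_le_add:
  assumes "dis A' dA dB f' \<le> dis A dA dB f + c" and "dis B' dB dA g' \<le> dis B dB dA g + c"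
    and "codis A' dA B' dB f' g' \<le> codis A dA B dB f g + c"
  shows "pair_distortion A' dA B' dB (f', g') \<le> pair_distortion A dA B dB (f, g) + c"
  using assms unfolding pair_distortion_def by auto

locale bounded_metric_pair = X: Metric_space X dX + Y: Metric_space Y dY
  for X :: "'a set" and dX and Y :: "'b set" and dY +
  assumes mbounded_X: "X.mbounded X" and mbounded_Y: "Y.mbounded Y"

context bounded_metric_pair
begin

lemma dist_diff_bounded:
  obtains K where "\<And>x x' y y'. x \<in> X \<Longrightarrow> x' \<in> X \<Longrightarrow> y \<in> Y \<Longrightarrow> y' \<in> Y \<Longrightarrow> \<bar>dX x x' - dY y y'\<bar> \<le> K"
proof -
  obtain KX KY where "\<forall>x\<in>X. \<forall>x'\<in>X. dX x x' \<le> KX" "\<forall>y\<in>Y. \<forall>y'\<in>Y. dY y y' \<le> KY"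
    using mbounded_X mbounded_Y by (auto simp: X.mbounded_alt Y.mbounded_alt)
  then have "\<bar>dX x x' - dY y y'\<bar> \<le> KX + KY" if "x \<in> X" "x' \<in> X" "y \<in> Y" "y' \<in> Y" for x x' y y'
    using that X.nonneg[of x x'] Y.nonneg[of y y'] by (smt (verit, best))
  then show thesis by (rule that)
qed

lemma dis_upper:
  assumes "A \<subseteq> X" "f \<in> A \<rightarrow> Y" "x \<in> A" "x' \<in> A"
  shows "\<bar>dX x x' - dY (f x) (f x')\<bar> \<le> dis A dX dY f"
proof -
  obtain K where K: "\<And>x x' y y'. x \<in> X \<Longrightarrow> x' \<in> X \<Longrightarrow> y \<in> Y \<Longrightarrow> y' \<in> Y \<Longrightarrow> \<bar>dX x x' - dY y y'\<bar> \<le> K"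
    using dist_diff_bounded by blast
  then have "bdd_above ((\<lambda>p. \<bar>dX (fst p) (snd p) - dY (f (fst p)) (f (snd p))\<bar>) ` (A \<times> A))"
    using assms(1,2) by (intro bdd_aboveI2[where M=K]) (auto intro!: K)
  then show ?thesis
    unfolding dis_def by (rule cSUP_upper2[where x="(x, x')"]) (use assms(3,4) in auto)
qed

lemma dis_nonneg:
  assumes "A \<subseteq> X" "A \<noteq> {}" "f \<in> A \<rightarrow> Y"
  shows "0 \<le> dis A dX dY f"
proof -
  obtain x where "x \<in> A" using assms(2) by blast
  with dis_upper[OF assms(1,3) this this] show ?thesis using assms by auto
qed

lemma codis_upper:
  assumes "A \<subseteq> X" "B \<subseteq> Y" "f \<in> A \<rightarrow> Y" "g \<in> B \<rightarrow> X" "x \<in> A" "y \<in> B"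
  shows "\<bar>dX x (g y) - dY (f x) y\<bar> \<le> codis A dX B dY f g"
proof -
  obtain K where K: "\<And>x x' y y'. x \<in> X \<Longrightarrow> x' \<in> X \<Longrightarrow> y \<in> Y \<Longrightarrow> y' \<in> Y \<Longrightarrow> \<bar>dX x x' - dY y y'\<bar> \<le> K"
    using dist_diff_bounded by blast
  then have "bdd_above ((\<lambda>p. \<bar>dX (fst p) (g (snd p)) - dY (f (fst p)) (snd p)\<bar>) ` (A \<times> B))"
    using assms(1-4) by (intro bdd_aboveI2[where M=K]) (auto intro!: K)
  then show ?thesis
    unfolding codis_def by (rule cSUP_upper2[where x="(x, y)"]) (use assms(5,6) in auto)
qed

lemma bdd_below_dis:
  assumes "A \<subseteq> X" "A \<noteq> {}" "B \<subseteq> Y"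
  shows "bdd_below ((\<lambda>f. dis A dX dY f) ` (A \<rightarrow> B))"
proof (rule bdd_belowI2[where m=0])
  fix f assume "f \<in> A \<rightarrow> B"
  with assms show "0 \<le> dis A dX dY f" by (intro dis_nonneg) auto
qed

lemma bdd_below_pair_distortion:
  assumes "A \<subseteq> X" "A \<noteq> {}" "B \<subseteq> Y"
  shows "bdd_below (pair_distortion A dX B dY ` ((A \<rightarrow> B) \<times> (B \<rightarrow> A)))"
proof (rule bdd_belowI2[where m=0])
  fix fg assume "fg \<in> (A \<rightarrow> B) \<times> (B \<rightarrow> A)"
  with assms have "0 \<le> dis A dX dY (fst fg)" by (intro dis_nonneg) auto
  then show "0 \<le> pair_distortion A dX B dY fg" unfolding pair_distortion_def by auto
qed

lemma dis_perturb_le: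
  assumes "A \<subseteq> X" "A' \<subseteq> X" "A' \<noteq> {}" "f \<in> A \<rightarrow> Y" "f' \<in> A' \<rightarrow> Y"
    and close: "\<And>x. x \<in> A' \<Longrightarrow> \<exists>u\<in>A. dX x u \<le> e \<and> dY (f u) (f' x) \<le> e'"
  shows "dis A' dX dY f' \<le> dis A dX dY f + 2*e + 2*e'"
proof (rule dis_least[OF assms(3)])
  fix x x' assume "x \<in> A'" "x' \<in> A'"
  with close obtain u u' where u: "u \<in> A" "dX x u \<le> e" "dY (f u) (f' x) \<le> e'"
    and u': "u' \<in> A" "dX x' u' \<le> e" "dY (f u') (f' x') \<le> e'" by meson
  have "\<bar>dX x x' - dX u u'\<bar> \<le> dX x u + dX x' u'"
    using \<open>x \<in> A'\<close> \<open>x' \<in> A'\<close> u u' assms(1,2) by (intro X.abs_mdist_diff_le) auto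
  moreover have "\<bar>dX u u' - dY (f u) (f u')\<bar> \<le> dis A dX dY f"
    using assms(1,4) u u' by (intro dis_upper)
  moreover have "\<bar>dY (f u) (f u') - dY (f' x) (f' x')\<bar> \<le> dY (f u) (f' x) + dY (f u') (f' x')"
    using \<open>x \<in> A'\<close> \<open>x' \<in> A'\<close> u u' assms(4,5) by (intro Y.abs_mdist_diff_le) auto
  ultimately show "\<bar>dX x x' - dY (f' x) (f' x')\<bar> \<le> dis A dX dY f + 2*e + 2*e'"
    using u u' by linarith
qed

lemma codis_perturb_le:
  assumes "A \<subseteq> X" "A' \<subseteq> X" "A' \<noteq> {}" "B \<subseteq> Y" "B' \<subseteq> Y" "B' \<noteq> {}"
    and "f \<in> A \<rightarrow> Y" "f' \<in> A' \<rightarrow> Y" "g \<in> B \<rightarrow> X" "g' \<in> B' \<rightarrow> X"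
    and close_f: "\<And>x. x \<in> A' \<Longrightarrow> \<exists>u\<in>A. dX x u \<le> e \<and> dY (f u) (f' x) \<le> e'"
    and close_g: "\<And>y. y \<in> B' \<Longrightarrow> \<exists>v\<in>B. dY y v \<le> e \<and> dX (g v) (g' y) \<le> e'"
  shows "codis A' dX B' dY f' g' \<le> codis A dX B dY f g + 2*e + 2*e'"
proof (rule codis_least[OF assms(3,6)])
  fix x y assume "x \<in> A'" "y \<in> B'"
  with close_f close_g obtain u v where u: "u \<in> A" "dX x u \<le> e" "dY (f u) (f' x) \<le> e'"
    and v: "v \<in> B" "dY y v \<le> e" "dX (g v) (g' y) \<le> e'" by meson
  have "\<bar>dX x (g' y) - dX u (g v)\<bar> \<le> dX x u + dX (g' y) (g v)"
    using \<open>x \<in> A'\<close> \<open>y \<in> B'\<close> u v assms by (intro X.abs_mdist_diff_le) auto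
  moreover have "\<bar>dX u (g v) - dY (f u) v\<bar> \<le> codis A dX B dY f g"
    using assms u v by (intro codis_upper)
  moreover have "\<bar>dY (f u) v - dY (f' x) y\<bar> \<le> dY (f u) (f' x) + dY v y"
    using \<open>x \<in> A'\<close> \<open>y \<in> B'\<close> u v assms by (intro Y.abs_mdist_diff_le) auto
  ultimately show "\<bar>dX x (g' y) - dY (f' x) y\<bar> \<le> codis A dX B dY f g + 2*e + 2*e'"
    using u v X.commute[of "g' y" "g v"] Y.commute[of v y] by linarith
qed

end

lemma eps_net_proj:
  assumes "is_eps_net X d \<epsilon> N"
  obtains p where "\<And>x. x \<in> X \<Longrightarrow> p x \<in> N \<and> d x (p x) \<le> \<epsilon>"
  using assms unfolding is_eps_net_def by metis

locale eps_nets = bounded_metric_pair +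
  fixes Xe :: "'a set" and Ye :: "'b set" and \<epsilon> :: real and p :: "'a \<Rightarrow> 'a" and q :: "'b \<Rightarrow> 'b"
  assumes X_nonempty: "X \<noteq> {}" and Y_nonempty: "Y \<noteq> {}"
    and Xe_subset: "Xe \<subseteq> X" and Ye_subset: "Ye \<subseteq> Y"
    and p: "\<And>x. x \<in> X \<Longrightarrow> p x \<in> Xe \<and> dX x (p x) \<le> \<epsilon>"
    and q: "\<And>y. y \<in> Y \<Longrightarrow> q y \<in> Ye \<and> dY y (q y) \<le> \<epsilon>"

sublocale eps_nets \<subseteq> swap_nets: eps_nets Y dY X dX Ye Xe \<epsilon> q p
  using mbounded_X mbounded_Y X_nonempty Y_nonempty Xe_subset Ye_subset p q by unfold_locales

context eps_nets
begin

lemma Xe_nonempty: "Xe \<noteq> {}"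
  using X_nonempty p by blast

lemma Ye_nonempty: "Ye \<noteq> {}"
  using Y_nonempty q by blast

lemma dis_proj_comp_le:
  assumes "f \<in> X \<rightarrow> Y"
  shows "dis Xe dX dY (q \<circ> f) \<le> dis X dX dY f + 2*\<epsilon>"
proof -
  have "dis Xe dX dY (q \<circ> f) \<le> dis X dX dY f + 2*0 + 2*\<epsilon>"
  proof (rule dis_perturb_le)
    show "q \<circ> f \<in> Xe \<rightarrow> Y"
      using assms Xe_subset Ye_subset q by fastforce
    fix x assume "x \<in> Xe"
    then show "\<exists>u\<in>X. dX x u \<le> 0 \<and> dY (f u) ((q \<circ> f) x) \<le> \<epsilon>"
      using assms Xe_subset q by (intro bexI[of _ x]) auto
  qed (use assms Xe_subset Xe_nonempty in auto)
  then show ?thesis by simp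
qed

lemma dis_comp_proj_le:
  assumes "f \<in> Xe \<rightarrow> Ye"
  shows "dis X dX dY (f \<circ> p) \<le> dis Xe dX dY f + 2*\<epsilon>"
proof -
  have "dis X dX dY (f \<circ> p) \<le> dis Xe dX dY f + 2*\<epsilon> + 2*0"
  proof (rule dis_perturb_le)
    show "f \<in> Xe \<rightarrow> Y" "f \<circ> p \<in> X \<rightarrow> Y"
      using assms p Ye_subset by fastforce+
    fix x assume "x \<in> X"
    then show "\<exists>u\<in>Xe. dX x u \<le> \<epsilon> \<and> dY (f u) ((f \<circ> p) x) \<le> 0"
      using assms p Ye_subset by (intro bexI[of _ "p x"]) fastforce+
  qed (use Xe_subset X_nonempty in auto)
  then show ?thesis by simp
qed

lemma codis_proj_comp_le:
  assumes "f \<in> X \<rightarrow> Y" "g \<in> Y \<rightarrow> X"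
  shows "codis Xe dX Ye dY (q \<circ> f) (p \<circ> g)
    \<le> codis X dX Y dY f g + 2*\<epsilon>"
proof -
  have "codis Xe dX Ye dY (q \<circ> f) (p \<circ> g)
      \<le> codis X dX Y dY f g + 2*0 + 2*\<epsilon>"
  proof (rule codis_perturb_le)
    show "q \<circ> f \<in> Xe \<rightarrow> Y" "p \<circ> g \<in> Ye \<rightarrow> X"
      using assms Xe_subset Ye_subset p q by fastforce+
    fix x assume "x \<in> Xe"
    then show "\<exists>u\<in>X. dX x u \<le> 0 \<and> dY (f u) ((q \<circ> f) x) \<le> \<epsilon>"
      using assms Xe_subset q by (intro bexI[of _ x]) auto
  next
    fix y assume "y \<in> Ye"
    then show "\<exists>v\<in>Y. dY y v \<le> 0 \<and> dX (g v) ((p \<circ> g) y) \<le> \<epsilon>"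
      using assms Ye_subset p by (intro bexI[of _ y]) auto
  qed (use assms Xe_subset Xe_nonempty Ye_subset Ye_nonempty in auto)
  then show ?thesis by simp
qed

lemma codis_comp_proj_le:
  assumes "f \<in> Xe \<rightarrow> Ye" "g \<in> Ye \<rightarrow> Xe"
  shows "codis X dX Y dY (f \<circ> p) (g \<circ> q)
    \<le> codis Xe dX Ye dY f g + 2*\<epsilon>"
proof -
  have "codis X dX Y dY (f \<circ> p) (g \<circ> q)
      \<le> codis Xe dX Ye dY f g + 2*\<epsilon> + 2*0"
  proof (rule codis_perturb_le)
    show "f \<in> Xe \<rightarrow> Y" "f \<circ> p \<in> X \<rightarrow> Y" "g \<in> Ye \<rightarrow> X" "g \<circ> q \<in> Y \<rightarrow> X"
      using assms Xe_subset Ye_subset p q by fastforce+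
    fix x assume "x \<in> X"
    then show "\<exists>u\<in>Xe. dX x u \<le> \<epsilon> \<and> dY (f u) ((f \<circ> p) x) \<le> 0"
      using assms p Ye_subset by (intro bexI[of _ "p x"]) fastforce+
  next
    fix y assume "y \<in> Y"
    then show "\<exists>v\<in>Ye. dY y v \<le> \<epsilon> \<and> dX (g v) ((g \<circ> q) y) \<le> 0"
      using assms Xe_subset q by (intro bexI[of _ "q y"]) fastforce+
  qed (use Xe_subset Ye_subset X_nonempty Y_nonempty in auto)
  then show ?thesis by simp
qed

lemma INF_dis_net_le:
  "(INF f \<in> Xe \<rightarrow> Ye. dis Xe dX dY f) \<le> (INF f \<in> X \<rightarrow> Y. dis X dX dY f) + 2*\<epsilon>"
proof (rule INF_le_INF_add)
  show "X \<rightarrow> Y \<noteq> {}" using Y_nonempty by simp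
  show "bdd_below ((\<lambda>f. dis Xe dX dY f) ` (Xe \<rightarrow> Ye))"
    using Xe_subset Xe_nonempty Ye_subset by (rule bdd_below_dis)
  fix f assume "f \<in> X \<rightarrow> Y"
  moreover have "q \<circ> f \<in> Xe \<rightarrow> Ye" using \<open>f \<in> X \<rightarrow> Y\<close> Xe_subset q by fastforce
  ultimately show "\<exists>f'\<in>Xe \<rightarrow> Ye. dis Xe dX dY f' \<le> dis X dX dY f + 2*\<epsilon>"
    by (intro bexI[of _ "q \<circ> f"] dis_proj_comp_le)
qed

lemma INF_dis_le_net:
  "(INF f \<in> X \<rightarrow> Y. dis X dX dY f) \<le> (INF f \<in> Xe \<rightarrow> Ye. dis Xe dX dY f) + 2*\<epsilon>"
proof (rule INF_le_INF_add)
  show "Xe \<rightarrow> Ye \<noteq> {}" using Ye_nonempty by simp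
  show "bdd_below ((\<lambda>f. dis X dX dY f) ` (X \<rightarrow> Y))"
    using X_nonempty by (intro bdd_below_dis) auto
  fix f assume "f \<in> Xe \<rightarrow> Ye"
  moreover have "f \<circ> p \<in> X \<rightarrow> Y" using \<open>f \<in> Xe \<rightarrow> Ye\<close> Ye_subset p by fastforce
  ultimately show "\<exists>f'\<in>X \<rightarrow> Y. dis X dX dY f' \<le> dis Xe dX dY f + 2*\<epsilon>"
    by (intro bexI[of _ "f \<circ> p"] dis_comp_proj_le)
qed

end

text \<open>The context is reopened so that the lemmas above are also available for the
  interpretation \<open>swap_nets\<close>, which exchanges the roles of \<open>X\<close> and \<open>Y\<close>.\<close>

context eps_nets
begin

lemma INF_pair_distortion_net_le:
  "(INF fg \<in> (Xe \<rightarrow> Ye) \<times> (Ye \<rightarrow> Xe). pair_distortion Xe dX Ye dY fg)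
    \<le> (INF fg \<in> (X \<rightarrow> Y) \<times> (Y \<rightarrow> X). pair_distortion X dX Y dY fg) + 2*\<epsilon>"
proof (rule INF_le_INF_add)
  show "(X \<rightarrow> Y) \<times> (Y \<rightarrow> X) \<noteq> {}" using X_nonempty Y_nonempty by simp
  show "bdd_below (pair_distortion Xe dX Ye dY ` ((Xe \<rightarrow> Ye) \<times> (Ye \<rightarrow> Xe)))"
    using Xe_subset Xe_nonempty Ye_subset by (rule bdd_below_pair_distortion)
  fix fg assume "fg \<in> (X \<rightarrow> Y) \<times> (Y \<rightarrow> X)"
  then obtain f g where fg: "fg = (f, g)" "f \<in> X \<rightarrow> Y" "g \<in> Y \<rightarrow> X" by auto
  have "(q \<circ> f, p \<circ> g) \<in> (Xe \<rightarrow> Ye) \<times> (Ye \<rightarrow> Xe)"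
    using fg Xe_subset Ye_subset p q by fastforce
  moreover have "pair_distortion Xe dX Ye dY (q \<circ> f, p \<circ> g) \<le> pair_distortion X dX Y dY fg + 2*\<epsilon>"
    unfolding fg(1) using dis_proj_comp_le[OF fg(2)] swap_nets.dis_proj_comp_le[OF fg(3)]
      codis_proj_comp_le[OF fg(2,3)] by (rule pair_distortion_le_add)
  ultimately show "\<exists>fg'\<in>(Xe \<rightarrow> Ye) \<times> (Ye \<rightarrow> Xe).
      pair_distortion Xe dX Ye dY fg' \<le> pair_distortion X dX Y dY fg + 2*\<epsilon>" ..
qed

lemma INF_pair_distortion_le_net:
  "(INF fg \<in> (X \<rightarrow> Y) \<times> (Y \<rightarrow> X). pair_distortion X dX Y dY fg)
    \<le> (INF fg \<in> (Xe \<rightarrow> Ye) \<times> (Ye \<rightarrow> Xe). pair_distortion Xe dX Ye dY fg) + 2*\<epsilon>"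
proof (rule INF_le_INF_add)
  show "(Xe \<rightarrow> Ye) \<times> (Ye \<rightarrow> Xe) \<noteq> {}" using Xe_nonempty Ye_nonempty by simp
  show "bdd_below (pair_distortion X dX Y dY ` ((X \<rightarrow> Y) \<times> (Y \<rightarrow> X)))"
    using X_nonempty by (intro bdd_below_pair_distortion) auto
  fix fg assume "fg \<in> (Xe \<rightarrow> Ye) \<times> (Ye \<rightarrow> Xe)"
  then obtain f g where fg: "fg = (f, g)" "f \<in> Xe \<rightarrow> Ye" "g \<in> Ye \<rightarrow> Xe" by auto
  have "(f \<circ> p, g \<circ> q) \<in> (X \<rightarrow> Y) \<times> (Y \<rightarrow> X)"
    using fg Xe_subset Ye_subset p q by fastforce
  moreover have "pair_distortion X dX Y dY (f \<circ> p, g \<circ> q) \<le> pair_distortion Xe dX Ye dY fg + 2*\<epsilon>"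
    unfolding fg(1) using dis_comp_proj_le[OF fg(2)] swap_nets.dis_comp_proj_le[OF fg(3)]
      codis_comp_proj_le[OF fg(2,3)] by (rule pair_distortion_le_add)
  ultimately show "\<exists>fg'\<in>(X \<rightarrow> Y) \<times> (Y \<rightarrow> X).
      pair_distortion X dX Y dY fg' \<le> pair_distortion Xe dX Ye dY fg + 2*\<epsilon>" ..
qed

end

theorem claim2:
  fixes X :: "'a set" and dX :: "'a \<Rightarrow> 'a \<Rightarrow> real"
    and Y :: "'b set" and dY :: "'b \<Rightarrow> 'b \<Rightarrow> real"
    and \<epsilon> :: real and Xe :: "'a set" and Ye :: "'b set"
  assumes "Metric_space X dX" and "Metric_space Y dY"
    and "compact_space (Metric_space.mtopology X dX)"
    and "compact_space (Metric_space.mtopology Y dY)"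
    and "X \<noteq> {}" and "Y \<noteq> {}"
    and "\<epsilon> \<ge> 0"
    and "is_eps_net X dX \<epsilon> Xe" and "is_eps_net Y dY \<epsilon> Ye"
    and "compactin (Metric_space.mtopology X dX) Xe"
    and "compactin (Metric_space.mtopology Y dY) Ye"
  shows "\<bar>dGH X dX Y dY - dGH Xe dX Ye dY\<bar> \<le> \<epsilon> \<and>
         \<bar>mdGH X dX Y dY - mdGH Xe dX Ye dY\<bar> \<le> \<epsilon>"
proof -
  have "Metric_space.mbounded X dX X" "Metric_space.mbounded Y dY Y"
    using assms(1-4) by (simp_all add: Metric_space.compact_space_imp_mbounded)
  moreover obtain p where "\<And>x. x \<in> X \<Longrightarrow> p x \<in> Xe \<and> dX x (p x) \<le> \<epsilon>"
    using eps_net_proj[OF assms(8)] by blast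
  moreover obtain q where "\<And>y. y \<in> Y \<Longrightarrow> q y \<in> Ye \<and> dY y (q y) \<le> \<epsilon>"
    using eps_net_proj[OF assms(9)] by blast
  ultimately interpret eps_nets X dX Y dY Xe Ye \<epsilon> p q
    using assms(1,2,5,6,8,9) unfolding is_eps_net_def
    by (intro eps_nets.intro eps_nets_axioms.intro bounded_metric_pair.intro bounded_metric_pair_axioms.intro) auto
  have "\<bar>dGH X dX Y dY - dGH Xe dX Ye dY\<bar> \<le> \<epsilon>"
    using INF_pair_distortion_net_le INF_pair_distortion_le_net
    unfolding dGH_eq_INF_pair_distortion by linarith
  moreover have "\<bar>mdGH X dX Y dY - mdGH Xe dX Ye dY\<bar> \<le> \<epsilon>"
    using INF_dis_net_le INF_dis_le_net swap_nets.INF_dis_net_le swap_nets.INF_dis_le_net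
    unfolding mdGH_def by (simp add: abs_le_iff max_def)
  ultimately show ?thesis ..
qed

end
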